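(* Let $q$ be a complex number with $|q|<1$. Then \[ \sum_{n\geq 0} q^{2n} (q^{4n+4};q^4)_\infty (q;q)_{2n} = \frac{2(q^4;q^4)_\infty}{1+q}- \frac{(q;q)_\infty}{1+q}, \] and \[ (1+q) \sum_{n\geq 0} \frac{(-q^2;q^2)_n\, q^{2n+1}}{(q;q^2)_{n+1}} = \frac{(q^4;q^4)_\infty}{(q;q)_\infty}-1 . \]
   Context: For a complex number $a$ and $|q|<1$: $(a;q)_0=1$, $(a;q)_n=\prod_{j=0}^{n-1}(1-aq^j)$ for integers $n\ge 1$, and $(a;q)_\infty=\prod_{j=0}^{\infty}(1-aq^j)$. *)

theory Defs
  imports "HOL-Analysis.Analysis"
begin

definition qpoch :: "complex \<Rightarrow> complex \<Rightarrow> nat \<Rightarrow> complex" where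
  "qpoch a q n = (\<Prod>j<n. 1 - a * q ^ j)"

definition qpoch_inf :: "complex \<Rightarrow> complex \<Rightarrow> complex" where
  "qpoch_inf a q = (\<Prod>j. 1 - a * q ^ j)"

end

theory Submission
  imports Defs
begin

text \<open>Both series telescope along the sequence
  r(n) = (-q^2;q^2)_n / (q;q^2)_n = (q^4;q^4)_n / (q;q)_{2n},
  which satisfies r(n+1) (1 - q^{2n+1}) = r(n) (1 + q^{2n+2}) and tends to (q^4;q^4)_inf / (q;q)_inf.
  In the second series, (1 + q) times the n-th term is r(n+1) - r(n).
  In the first, (q^{4n+4};q^4)_inf = (q^4;q^4)_inf / (q^4;q^4)_n turns the n-th term into
  (q^4;q^4)_inf q^{2n} / r(n), and the recursion gives
  (1 + q) q^{2n} / r(n) = (1 + q^{2n}) / r(n) - (1 + q^{2n+2}) / r(n+1).\<close>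

lemma qpoch_0 [simp]: "qpoch a r 0 = 1"
  by (simp add: qpoch_def)

lemma qpoch_Suc [simp]: "qpoch a r (Suc n) = qpoch a r n * (1 - a * r ^ n)"
  by (simp add: qpoch_def)

lemma qpoch_add: "qpoch a r (m + n) = qpoch a r m * qpoch (a * r ^ m) r n"
  by (induction n) (simp_all add: power_add mult_ac)

lemma qpoch_minus_mult: "qpoch (- a) r n * qpoch a r n = qpoch (a\<^sup>2) (r\<^sup>2) n"
  by (induction n) (simp_all add: algebra_simps power2_eq_square power_mult_distrib power_mult)

lemma qpoch_double: "qpoch a r (2 * n) = qpoch a (r\<^sup>2) n * qpoch (a * r) (r\<^sup>2) n"
proof (induction n)
  case (Suc n)
  have "qpoch a r (2 * Suc n) = qpoch a r (2 * n) * ((1 - a * r ^ (2 * n)) * (1 - a * r * r ^ (2 * n)))"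
    by (simp add: mult_ac)
  with Suc show ?case
    by (simp add: mult_ac flip: power_mult)
qed simp

lemma convergent_prod_qpoch:
  fixes a r :: complex
  assumes "norm r < 1"
  shows "convergent_prod (\<lambda>j. 1 - a * r ^ j)"
proof -
  have "summable (\<lambda>j. norm a * norm r ^ j)"
    using assms by (intro summable_mult summable_geometric) auto
  then have "summable (\<lambda>j. norm ((1 - a * r ^ j) - 1))"
    by (simp add: norm_mult norm_power)
  then show ?thesis
    by (intro abs_convergent_prod_imp_convergent_prod summable_imp_abs_convergent_prod)
qed

lemma qpoch_tendsto:
  assumes "norm r < 1"
  shows "(\<lambda>n. qpoch a r n) \<longlonglongrightarrow> qpoch_inf a r"
proof -
  have "(\<lambda>n. qpoch a r (Suc n)) \<longlonglongrightarrow> qpoch_inf a r"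
    using convergent_prod_LIMSEQ[OF convergent_prod_qpoch[OF assms]]
    by (simp add: qpoch_def qpoch_inf_def lessThan_Suc_atMost)
  then show ?thesis
    by (rule LIMSEQ_imp_Suc)
qed

lemma qpoch_inf_split:
  assumes "norm r < 1"
  shows "qpoch_inf a r = qpoch a r m * qpoch_inf (a * r ^ m) r"
proof (rule LIMSEQ_unique)
  show "(\<lambda>n. qpoch a r (m + n)) \<longlonglongrightarrow> qpoch_inf a r"
    using LIMSEQ_ignore_initial_segment[OF qpoch_tendsto[OF assms, of a], of m]
    by (simp add: add.commute)
  show "(\<lambda>n. qpoch a r (m + n)) \<longlonglongrightarrow> qpoch a r m * qpoch_inf (a * r ^ m) r"
    unfolding qpoch_add by (intro tendsto_mult tendsto_const qpoch_tendsto assms)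
qed

lemma qpoch_factor_nonzero:
  fixes a r :: complex
  assumes "norm a < 1" "norm r \<le> 1"
  shows "1 - a * r ^ j \<noteq> 0"
proof -
  have "norm (a * r ^ j) \<le> norm a"
    using assms by (simp add: norm_mult norm_power mult_left_le power_le_one)
  with assms show ?thesis
    by auto
qed

lemma qpoch_nonzero:
  assumes "norm a < 1" "norm r \<le> 1"
  shows "qpoch a r n \<noteq> 0"
  using qpoch_factor_nonzero[OF assms] by (simp add: qpoch_def)

lemma qpoch_inf_nonzero:
  assumes "norm a < 1" "norm r < 1"
  shows "qpoch_inf a r \<noteq> 0"
  unfolding qpoch_inf_def
  using assms qpoch_factor_nonzero[OF assms(1)] by (intro prodinf_nonzero convergent_prod_qpoch) auto

lemma telescope_sums_scaled:
  fixes f g :: "nat \<Rightarrow> 'a::real_normed_field"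
  assumes "c \<noteq> 0" "\<And>n. c * f n = g (Suc n) - g n" "g \<longlonglongrightarrow> L"
  shows "f sums ((L - g 0) / c)"
  using telescope_sums[OF assms(3)] assms(1) by (intro sums_mult_D) (simp_all flip: assms(2))

lemma norm_power_less_one:
  fixes q :: "'a::real_normed_div_algebra"
  assumes "norm q < 1" "k > 0"
  shows "norm (q ^ k) < 1"
  using assms by (simp add: norm_power power_less_one_iff)

lemma strict_mono_double: "strict_mono (\<lambda>n::nat. 2 * n)"
  by (auto simp: strict_mono_def)

definition qpoch_ratio :: "complex \<Rightarrow> nat \<Rightarrow> complex" where
  "qpoch_ratio q n = qpoch (- (q\<^sup>2)) (q\<^sup>2) n / qpoch q (q\<^sup>2) n"

lemma qpoch_ratio_0 [simp]: "qpoch_ratio q 0 = 1"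
  by (simp add: qpoch_ratio_def)

context
  fixes q :: complex
  assumes q: "norm q < 1"
begin

lemma qpoch_ratio_Suc:
  "qpoch_ratio q (Suc n) = qpoch_ratio q n * (1 + q ^ (2 * n + 2)) / (1 - q ^ (2 * n + 1))"
proof -
  have "(q\<^sup>2) ^ n = q ^ (2 * n)"
    by (simp add: power_mult)
  then show ?thesis
    by (simp add: qpoch_ratio_def power_add power2_eq_square mult_ac)
qed

lemma qpoch_ratio_eq: "qpoch_ratio q n = qpoch (q ^ 4) (q ^ 4) n / qpoch q q (2 * n)"
proof -
  have "qpoch (q ^ 4) (q ^ 4) n = qpoch (- (q\<^sup>2)) (q\<^sup>2) n * qpoch (q\<^sup>2) (q\<^sup>2) n"
    using qpoch_minus_mult[of "q\<^sup>2" "q\<^sup>2" n] by (simp flip: power_mult)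
  moreover have "qpoch q q (2 * n) = qpoch q (q\<^sup>2) n * qpoch (q\<^sup>2) (q\<^sup>2) n"
    by (simp add: qpoch_double power2_eq_square)
  moreover have "qpoch (q\<^sup>2) (q\<^sup>2) n \<noteq> 0"
    using q by (intro qpoch_nonzero norm_power_less_one less_imp_le) auto
  ultimately show ?thesis
    by (simp add: qpoch_ratio_def)
qed

lemma qpoch_ratio_tendsto: "qpoch_ratio q \<longlonglongrightarrow> qpoch_inf (q ^ 4) (q ^ 4) / qpoch_inf q q"
proof -
  have "(\<lambda>n. qpoch q q (2 * n)) \<longlonglongrightarrow> qpoch_inf q q"
    using LIMSEQ_subseq_LIMSEQ[OF qpoch_tendsto[OF q] strict_mono_double] by (simp add: o_def)
  then show ?thesis
    unfolding qpoch_ratio_eq[abs_def] using q norm_power_less_one[OF q]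
    by (intro tendsto_divide qpoch_tendsto qpoch_inf_nonzero) auto
qed

lemma qpoch_ratio_nonzero: "qpoch_ratio q n \<noteq> 0"
  unfolding qpoch_ratio_def using q norm_power_less_one[OF q, of 2]
  by (simp add: qpoch_nonzero)

lemma one_plus_q_nonzero: "1 + q \<noteq> 0"
  using q by (auto simp: add_eq_0_iff)

lemma odd_qpoch_series_eq:
  "(1 + q) * (\<Sum>n. qpoch (- (q\<^sup>2)) (q\<^sup>2) n * q ^ (2 * n + 1) / qpoch q (q\<^sup>2) (n + 1))
     = qpoch_inf (q ^ 4) (q ^ 4) / qpoch_inf q q - 1"
proof -
  have "(1 + q) * (qpoch (- (q\<^sup>2)) (q\<^sup>2) n * q ^ (2 * n + 1) / qpoch q (q\<^sup>2) (n + 1))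
          = qpoch_ratio q (Suc n) - qpoch_ratio q n" for n
  proof -
    have "norm (q ^ (2 * n + 1)) < 1" "norm (q\<^sup>2) < 1"
      by (rule norm_power_less_one[OF q]; simp)+
    then have "1 - q ^ (2 * n + 1) \<noteq> 0" "qpoch q (q\<^sup>2) n \<noteq> 0"
      using q by (auto simp: qpoch_nonzero)
    moreover have "(q\<^sup>2) ^ n = q ^ (2 * n)"
      by (simp add: power_mult)
    ultimately show ?thesis
      unfolding qpoch_ratio_Suc by (simp add: qpoch_ratio_def field_simps power2_eq_square)
  qed
  then have "(\<lambda>n. qpoch (- (q\<^sup>2)) (q\<^sup>2) n * q ^ (2 * n + 1) / qpoch q (q\<^sup>2) (n + 1))
      sums ((qpoch_inf (q ^ 4) (q ^ 4) / qpoch_inf q q - qpoch_ratio q 0) / (1 + q))"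
    by (intro telescope_sums_scaled one_plus_q_nonzero qpoch_ratio_tendsto)
  then show ?thesis
    using one_plus_q_nonzero by (simp add: sums_iff)
qed

lemma tail_product_series_eq:
  "(\<Sum>n. q ^ (2 * n) * qpoch_inf (q ^ (4 * n + 4)) (q ^ 4) * qpoch q q (2 * n))
     = 2 * qpoch_inf (q ^ 4) (q ^ 4) / (1 + q) - qpoch_inf q q / (1 + q)"
proof -
  define P where "P = qpoch_inf (q ^ 4) (q ^ 4)"
  define g where "g n = - (1 + q ^ (2 * n)) / qpoch_ratio q n" for n
  have "P \<noteq> 0"
    unfolding P_def using norm_power_less_one[OF q, of 4] by (simp add: qpoch_inf_nonzero)
  have terms: "q ^ (2 * n) * qpoch_inf (q ^ (4 * n + 4)) (q ^ 4) * qpoch q q (2 * n)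
                 = P * (q ^ (2 * n) / qpoch_ratio q n)" for n
  proof -
    have "qpoch (q ^ 4) (q ^ 4) n \<noteq> 0"
      using norm_power_less_one[OF q, of 4] by (simp add: qpoch_nonzero)
    moreover have "P = qpoch (q ^ 4) (q ^ 4) n * qpoch_inf (q ^ (4 * n + 4)) (q ^ 4)"
      unfolding P_def using qpoch_inf_split[OF norm_power_less_one[OF q], of 4 "q ^ 4" n]
      by (simp add: power_add mult.commute flip: power_mult)
    ultimately show ?thesis
      by (simp add: qpoch_ratio_eq field_simps)
  qed
  have "(1 + q) * (q ^ (2 * n) / qpoch_ratio q n) = g (Suc n) - g n" for n
  proof -
    have "norm (q ^ (2 * n + 2)) < 1"
      by (rule norm_power_less_one[OF q]) simp
    then have "1 + q ^ (2 * n + 2) \<noteq> 0"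
      by (auto simp: add_eq_0_iff)
    have cancel: "- c / (r * c / d) = - d / r" if "c \<noteq> 0" for c d r :: complex
      using that by (cases "r = 0") (simp_all add: field_simps)
    have "g (Suc n) = - (1 + q ^ (2 * n + 2))
                        / (qpoch_ratio q n * (1 + q ^ (2 * n + 2)) / (1 - q ^ (2 * n + 1)))"
      by (simp add: g_def qpoch_ratio_Suc)
    also have "\<dots> = - (1 - q ^ (2 * n + 1)) / qpoch_ratio q n"
      by (rule cancel) fact
    finally show ?thesis
      using qpoch_ratio_nonzero[of n] by (simp add: g_def[of n] field_simps)
  qed
  moreover have "g \<longlonglongrightarrow> - (1 + 0) / (P / qpoch_inf q q)"
  proof -
    have "(\<lambda>n. q ^ (2 * n)) \<longlonglongrightarrow> 0"
      using LIMSEQ_power_zero[OF norm_power_less_one[OF q, of 2]] by (simp add: power_mult)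
    then show ?thesis
      unfolding g_def[abs_def] P_def using qpoch_inf_nonzero[OF q q] \<open>P \<noteq> 0\<close>[unfolded P_def]
      by (intro tendsto_intros qpoch_ratio_tendsto) auto
  qed
  ultimately have "(\<lambda>n. q ^ (2 * n) / qpoch_ratio q n)
                     sums ((- (1 + 0) / (P / qpoch_inf q q) - g 0) / (1 + q))"
    by (intro telescope_sums_scaled one_plus_q_nonzero)
  then have "(\<lambda>n. P * (q ^ (2 * n) / qpoch_ratio q n))
               sums (P * ((2 - qpoch_inf q q / P) / (1 + q)))"
    by (intro sums_mult) (simp add: g_def)
  moreover have "P * ((2 - qpoch_inf q q / P) / (1 + q)) = (2 * P - qpoch_inf q q) / (1 + q)"
    using \<open>P \<noteq> 0\<close> by (simp add: right_diff_distrib)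
  ultimately show ?thesis
    unfolding terms P_def[symmetric] by (simp add: sums_iff diff_divide_distrib)
qed

end

theorem theorem1:
  fixes q :: complex
  assumes "norm q < 1"
  shows "(\<Sum>n. q ^ (2*n) * qpoch_inf (q ^ (4*n+4)) (q ^ 4) * qpoch q q (2*n))
           = 2 * qpoch_inf (q ^ 4) (q ^ 4) / (1 + q) - qpoch_inf q q / (1 + q)
       \<and> (1 + q) * (\<Sum>n. qpoch (- (q ^ 2)) (q ^ 2) n * q ^ (2*n+1) / qpoch q (q ^ 2) (n+1))
           = qpoch_inf (q ^ 4) (q ^ 4) / qpoch_inf q q - 1"
  using tail_product_series_eq[OF assms] odd_qpoch_series_eq[OF assms] by simp

end
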